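(* Let $\beta>0$ and $n\ge 1$. For every $0<r<R$, \[\lambda_\beta(B_r)\le\left(\frac{\mathcal{L}^n(B_R)}{\mathcal{L}^n(B_r)}\right)^{2/n}\lambda_\beta(B_R),\] where $B_r$ and $B_R$ are balls in $\mathbb{R}^n$ of radii $r$ and $R$ respectively.
   Context: For an open bounded Lipschitz set $A\subset\mathbb{R}^n$ and $\beta>0$, the Robin eigenvalue is $\lambda_\beta(A)=\inf\left\{\frac{\int_A|\nabla v|^2\,d\mathcal{L}^n+\beta\int_{\partial A}v^2\,d\mathcal{H}^{n-1}}{\int_A v^2\,d\mathcal{L}^n}\ :\ v\in W^{1,2}(A)\setminus\{0\}\right\}$. *)

theory Defs
  imports "HOL-Analysis.Analysis"
begin

text \<open>Size of a covering set C for the s-dimensional Hausdorff measure: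
  omega_s (diam C / 2)^s, with the convention that the empty set contributes 0
  (so that for s = 0 one obtains the counting measure).\<close>

definition haus_gauge :: "nat \<Rightarrow> 'a::euclidean_space set \<Rightarrow> real" where
  "haus_gauge s C = (if C = {} then 0 else unit_ball_vol (real s) * (diameter C / 2) ^ s)"

definition hausdorff_pre :: "nat \<Rightarrow> real \<Rightarrow> 'a::euclidean_space set \<Rightarrow> ennreal" where
  "hausdorff_pre s \<delta> E =
     Inf {(\<Sum>i. ennreal (haus_gauge s (C i))) | C :: nat \<Rightarrow> 'a set.
            E \<subseteq> (\<Union>i. C i) \<and> (\<forall>i. bounded (C i) \<and> diameter (C i) \<le> \<delta>)}"

definition hausdorff :: "nat \<Rightarrow> 'a::euclidean_space set \<Rightarrow> ennreal" where
  "hausdorff s E = (SUP \<delta>\<in>{0<..}. hausdorff_pre s \<delta> E)"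

text \<open>Integral of a nonnegative function f over S with respect to the outer measure
  H^s, via the layer-cake formula.\<close>

definition hausdorff_integral :: "nat \<Rightarrow> 'a::euclidean_space set \<Rightarrow> ('a \<Rightarrow> real) \<Rightarrow> ennreal" where
  "hausdorff_integral s S f = (\<integral>\<^sup>+ t\<in>{0<..}. hausdorff s {x\<in>S. f x > t} \<partial>lborel)"

definition test_function :: "'a::euclidean_space set \<Rightarrow> ('a \<Rightarrow> real) \<Rightarrow> ('a \<Rightarrow> 'a) \<Rightarrow> bool" where
  "test_function A \<phi> D\<phi> \<longleftrightarrow>
     (\<forall>x. (\<phi> has_derivative (\<lambda>h. D\<phi> x \<bullet> h)) (at x)) \<and> continuous_on UNIV D\<phi> \<and>
     compact (closure {x. \<phi> x \<noteq> 0}) \<and> closure {x. \<phi> x \<noteq> 0} \<subseteq> A"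

definition weak_gradient :: "'a::euclidean_space set \<Rightarrow> ('a \<Rightarrow> real) \<Rightarrow> ('a \<Rightarrow> 'a) \<Rightarrow> bool" where
  "weak_gradient A v g \<longleftrightarrow>
     (\<forall>\<phi> D\<phi>. test_function A \<phi> D\<phi> \<longrightarrow>
        (LINT x:A|lebesgue. v x *\<^sub>R D\<phi> x) = - (LINT x:A|lebesgue. \<phi> x *\<^sub>R g x))"

definition W12 :: "'a::euclidean_space set \<Rightarrow> ('a \<Rightarrow> real) \<Rightarrow> ('a \<Rightarrow> 'a) \<Rightarrow> bool" where
  "W12 A v g \<longleftrightarrow>
     (\<lambda>x. indicator A x * v x) \<in> borel_measurable lebesgue \<and>
     (\<lambda>x. indicator A x *\<^sub>R g x) \<in> borel_measurable lebesgue \<and>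
     set_integrable lebesgue A (\<lambda>x. (v x)\<^sup>2) \<and>
     set_integrable lebesgue A (\<lambda>x. (norm (g x))\<^sup>2) \<and>
     weak_gradient A v g"

text \<open>Boundary trace, defined through averages over B(x,rho) intersected with A
  (for Lipschitz domains this agrees H^{n-1}-a.e. on the boundary with the trace).\<close>

definition boundary_trace :: "'a::euclidean_space set \<Rightarrow> ('a \<Rightarrow> real) \<Rightarrow> 'a \<Rightarrow> real" where
  "boundary_trace A v x =
     Lim (at_right 0) (\<lambda>\<rho>. (LINT y:(ball x \<rho> \<inter> A)|lebesgue. v y) / measure lebesgue (ball x \<rho> \<inter> A))"

definition robin_quotient :: "real \<Rightarrow> 'a::euclidean_space set \<Rightarrow> ('a \<Rightarrow> real) \<Rightarrow> ('a \<Rightarrow> 'a) \<Rightarrow> real" where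
  "robin_quotient \<beta> A v g =
     ((LINT x:A|lebesgue. (norm (g x))\<^sup>2)
       + \<beta> * enn2real (hausdorff_integral (DIM('a) - 1) (frontier A) (\<lambda>x. (boundary_trace A v x)\<^sup>2)))
     / (LINT x:A|lebesgue. (v x)\<^sup>2)"

definition robin_eigenvalue :: "real \<Rightarrow> 'a::euclidean_space set \<Rightarrow> real" where
  "robin_eigenvalue \<beta> A =
     Inf {robin_quotient \<beta> A v g | v g.
            W12 A v g \<and> \<not> (AE x in lebesgue. x \<in> A \<longrightarrow> v x = 0)}"

end

theory Submission
  imports Defs
begin

text \<open>With \<open>t = R / r \<ge> 1\<close>, the homothety \<open>T x = d + t x\<close> maps \<open>B\<^sub>r\<close> onto \<open>B\<^sub>R\<close>.  Pulling
  an admissible pair \<open>(v, g)\<close> of \<open>B\<^sub>R\<close> back to \<open>(v \<circ> T, t (g \<circ> T))\<close> on \<open>B\<^sub>r\<close>, volume integrals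
  scale by \<open>t\<^sup>-\<^sup>n\<close> but the \<open>(n-1)\<close>-dimensional boundary integral only by \<open>t\<^sup>1\<^sup>-\<^sup>n\<close>, so the
  Robin quotient becomes \<open>t\<^sup>2\<close> times the quotient of \<open>(v, g)\<close> for the parameter \<open>\<beta> / t \<le> \<beta>\<close>.
  Taking infima gives \<open>\<lambda>\<^sub>\<beta>(B\<^sub>r) \<le> t\<^sup>2 \<lambda>\<^sub>\<beta>(B\<^sub>R)\<close>, and \<open>t\<^sup>2\<close> is the volume ratio to the power
  \<open>2 / n\<close>.  The infimum over \<open>B\<^sub>R\<close> is taken over a nonempty set because constants are
  admissible: a test function's gradient integrates to zero.\<close>

lemma vimage_homothety_eq_image:
  fixes d :: "'a::real_vector"
  assumes "t \<noteq> 0"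
  shows "(\<lambda>x. d + t *\<^sub>R x) -` A = (\<lambda>y. - (1/t) *\<^sub>R d + (1/t) *\<^sub>R y) ` A"
proof -
  have "x = - (1/t) *\<^sub>R d + (1/t) *\<^sub>R (d + t *\<^sub>R x)" for x
    using assms by (simp add: scaleR_add_right)
  then show ?thesis
    using assms by (auto simp: scaleR_add_right scaleR_diff_right intro: rev_image_eqI)
qed

lemma vimage_homothety_ball:
  fixes d c :: "'a::real_normed_vector"
  assumes "t > 0"
  shows "(\<lambda>x. d + t *\<^sub>R x) -` ball (d + t *\<^sub>R c) (t * \<rho>) = ball c \<rho>"
proof -
  have "dist (d + t *\<^sub>R c) (d + t *\<^sub>R x) = t * dist c x" for x
    using assms by (simp add: dist_norm flip: scaleR_diff_right)
  then show ?thesis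
    using assms by auto
qed

lemma homeomorphic_map_homothety:
  fixes d :: "'a::real_normed_vector"
  assumes "t \<noteq> 0"
  shows "homeomorphic_map euclidean euclidean (\<lambda>x. d + t *\<^sub>R x)"
proof -
  have "homeomorphic_maps euclidean euclidean (\<lambda>x. d + t *\<^sub>R x) (\<lambda>y. - (1/t) *\<^sub>R d + (1/t) *\<^sub>R y)"
    using assms by (auto simp: homeomorphic_maps_def scaleR_add_right scaleR_diff_right intro!: continuous_intros)
  then show ?thesis
    using homeomorphic_map_maps by blast
qed

lemma
  fixes d :: "'a::real_normed_vector"
  assumes "t \<noteq> 0"
  shows closure_vimage_homothety: "closure ((\<lambda>x. d + t *\<^sub>R x) -` A) = (\<lambda>x. d + t *\<^sub>R x) -` closure A"
    and frontier_vimage_homothety: "frontier ((\<lambda>x. d + t *\<^sub>R x) -` A) = (\<lambda>x. d + t *\<^sub>R x) -` frontier A"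
  using homeomorphic_map_closure_of[OF homeomorphic_map_homothety[where t="1/t" and d="- (1/t) *\<^sub>R d"], of A]
    homeomorphic_map_frontier_of[OF homeomorphic_map_homothety[where t="1/t" and d="- (1/t) *\<^sub>R d"], of A]
    assms
  by (simp_all add: vimage_homothety_eq_image)

section \<open>Lebesgue integrals under homotheties\<close>

lemma lebesgue_homothety:
  fixes d :: "'a::euclidean_space"
  assumes "c \<noteq> 0"
  shows "lebesgue = density (distr lebesgue lebesgue (\<lambda>x. d + c *\<^sub>R x)) (\<lambda>_. \<bar>c\<bar> ^ DIM('a))"
    and "(\<lambda>x. d + c *\<^sub>R x) \<in> lebesgue \<rightarrow>\<^sub>M lebesgue"
  using lebesgue_affine_euclidean[where c="\<lambda>_::'a. c" and t=d]
    lebesgue_affine_measurable[where c="\<lambda>_::'a. c" and t=d] assms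
  unfolding scaleR_scaleR[symmetric] scaleR_sum_right[symmetric] euclidean_representation prod_constant
  by simp_all

lemma integrable_homothety:
  fixes f :: "'a::euclidean_space \<Rightarrow> 'b::euclidean_space"
  assumes f: "integrable lebesgue f" and "c \<noteq> 0"
  shows "integrable lebesgue (\<lambda>x. f (d + c *\<^sub>R x))"
proof -
  note hom = lebesgue_homothety[OF \<open>c \<noteq> 0\<close>, of d]
  have [measurable]: "f \<in> borel_measurable lebesgue"
    using f by auto
  have "integrable (density (distr lebesgue lebesgue (\<lambda>x. d + c *\<^sub>R x)) (\<lambda>_. \<bar>c\<bar> ^ DIM('a))) f"
    using f hom(1) by simp
  then have "integrable lebesgue (\<lambda>x. \<bar>c\<bar> ^ DIM('a) *\<^sub>R f (d + c *\<^sub>R x))"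
    using hom(2) by (simp add: integrable_density integrable_distr_eq)
  then have "integrable lebesgue (\<lambda>x. (1 / \<bar>c\<bar> ^ DIM('a)) *\<^sub>R (\<bar>c\<bar> ^ DIM('a) *\<^sub>R f (d + c *\<^sub>R x)))"
    by (rule integrable_scaleR_right)
  then show ?thesis
    using \<open>c \<noteq> 0\<close> by simp
qed

lemma integrable_homothety_iff:
  fixes f :: "'a::euclidean_space \<Rightarrow> 'b::euclidean_space"
  assumes "c \<noteq> 0"
  shows "integrable lebesgue (\<lambda>x. f (d + c *\<^sub>R x)) \<longleftrightarrow> integrable lebesgue f"
proof
  assume "integrable lebesgue (\<lambda>x. f (d + c *\<^sub>R x))"
  from integrable_homothety[OF this, of "1/c" "- (1/c) *\<^sub>R d"] assms
  show "integrable lebesgue f"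
    by (simp add: scaleR_diff_right)
qed (use integrable_homothety assms in auto)

lemma integral_homothety:
  fixes f :: "'a::euclidean_space \<Rightarrow> 'b::euclidean_space"
  assumes "c \<noteq> 0"
  shows "integral\<^sup>L lebesgue f = \<bar>c\<bar> ^ DIM('a) *\<^sub>R integral\<^sup>L lebesgue (\<lambda>x. f (d + c *\<^sub>R x))"
proof (cases "integrable lebesgue f")
  case True
  note hom = lebesgue_homothety[OF assms, of d]
  have "integral\<^sup>L lebesgue f
      = integral\<^sup>L (density (distr lebesgue lebesgue (\<lambda>x. d + c *\<^sub>R x)) (\<lambda>_. \<bar>c\<bar> ^ DIM('a))) f"
    using hom(1) by simp
  also have "\<dots> = \<bar>c\<bar> ^ DIM('a) *\<^sub>R integral\<^sup>L lebesgue (\<lambda>x. f (d + c *\<^sub>R x))"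
    using hom(2) True by (simp add: integral_density integral_distr borel_measurable_integrable)
  finally show ?thesis .
next
  case False
  with assms show ?thesis
    by (simp add: integrable_homothety_iff not_integrable_integral_eq)
qed

lemma set_integral_homothety:
  fixes f :: "'a::euclidean_space \<Rightarrow> 'b::euclidean_space"
  assumes "c \<noteq> 0"
  shows "(LINT x:E|lebesgue. f x)
           = \<bar>c\<bar> ^ DIM('a) *\<^sub>R (LINT x:(\<lambda>x. d + c *\<^sub>R x) -` E|lebesgue. f (d + c *\<^sub>R x))"
    and "set_integrable lebesgue ((\<lambda>x. d + c *\<^sub>R x) -` E) (\<lambda>x. f (d + c *\<^sub>R x))
           \<longleftrightarrow> set_integrable lebesgue E f"
  unfolding set_lebesgue_integral_def set_integrable_def indicator_vimage
  using integral_homothety[OF assms, of "\<lambda>x. indicator E x *\<^sub>R f x" d]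
    integrable_homothety_iff[OF assms, of "\<lambda>x. indicator E x *\<^sub>R f x" d]
  by simp_all

section \<open>Hausdorff measure under homotheties\<close>

lemma bounded_homothety_image:
  fixes C :: "'a::real_normed_vector set"
  assumes "bounded C"
  shows "bounded ((\<lambda>x. d + c *\<^sub>R x) ` C)"
  using bounded_translation[OF bounded_scaling[OF assms, of c], of d]
  by (simp add: image_image add.commute)

lemma diameter_homothety_image:
  fixes C :: "'a::real_normed_vector set"
  assumes "bounded C" "c > 0"
  shows "diameter ((\<lambda>x. d + c *\<^sub>R x) ` C) = c * diameter C"
proof (rule antisym)
  have dist: "dist (d + c *\<^sub>R x) (d + c *\<^sub>R y) = c * dist x y" for x y
    using assms(2) by (simp add: dist_norm flip: scaleR_diff_right)
  have bounded: "bounded ((\<lambda>x. d + c *\<^sub>R x) ` C)"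
    using assms(1) by (rule bounded_homothety_image)
  show "diameter ((\<lambda>x. d + c *\<^sub>R x) ` C) \<le> c * diameter C"
    using assms diameter_ge_0[OF assms(1)] diameter_bounded_bound[OF assms(1)] dist
    by (intro diameter_le) (auto simp: dist_norm[symmetric] mult_left_mono)
  have "diameter C \<le> diameter ((\<lambda>x. d + c *\<^sub>R x) ` C) / c"
  proof (rule diameter_le)
    fix x y assume "x \<in> C" "y \<in> C"
    then have "dist (d + c *\<^sub>R x) (d + c *\<^sub>R y) \<le> diameter ((\<lambda>x. d + c *\<^sub>R x) ` C)"
      by (intro diameter_bounded_bound[OF bounded]) auto
    then have "c * dist x y \<le> diameter ((\<lambda>x. d + c *\<^sub>R x) ` C)"
      by (simp only: dist)
    then show "norm (x - y) \<le> diameter ((\<lambda>x. d + c *\<^sub>R x) ` C) / c"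
      using assms by (simp add: dist_norm pos_le_divide_eq mult.commute)
  qed (use assms diameter_ge_0[OF bounded] in simp)
  then show "c * diameter C \<le> diameter ((\<lambda>x. d + c *\<^sub>R x) ` C)"
    using assms by (simp add: field_simps)
qed

lemma haus_gauge_homothety_image:
  fixes C :: "'a::euclidean_space set"
  assumes "bounded C" "c > 0"
  shows "haus_gauge s ((\<lambda>x. d + c *\<^sub>R x) ` C) = c ^ s * haus_gauge s C"
proof -
  have "(c * diameter C / 2) ^ s = c ^ s * (diameter C / 2) ^ s"
    by (metis power_mult_distrib times_divide_eq_right)
  then show ?thesis
    using diameter_homothety_image[OF assms, of d] by (simp add: haus_gauge_def)
qed

lemma ennreal_le_mult_Inf:
  fixes y k :: ennreal
  assumes "k \<noteq> 0" "k \<noteq> top" "\<And>x. x \<in> X \<Longrightarrow> y \<le> k * x"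
  shows "y \<le> k * Inf X"
proof -
  have "y / k \<le> Inf X"
  proof (rule Inf_greatest)
    fix x assume "x \<in> X"
    then have "y \<le> x * k"
      using assms(3) by (metis mult.commute)
    then have "y / k \<le> x * k / k"
      by (rule divide_right_mono_ennreal)
    then show "y / k \<le> x"
      using assms(1,2) by (simp add: ennreal_mult_divide_eq)
  qed
  then have "y / k * k \<le> Inf X * k"
    by (rule mult_right_mono) simp
  moreover have "y / k * k = y"
    using assms(1,2) by (simp add: ennreal_divide_times top.not_eq_extremum)
  ultimately show ?thesis
    by (simp add: mult.commute)
qed

lemma hausdorff_pre_homothety_image_le:
  fixes E :: "'a::euclidean_space set"
  assumes "c > 0"
  shows "hausdorff_pre s (c * \<delta>) ((\<lambda>x. d + c *\<^sub>R x) ` E) \<le> ennreal (c ^ s) * hausdorff_pre s \<delta> E"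
  unfolding hausdorff_pre_def[of s \<delta>]
proof (rule ennreal_le_mult_Inf)
  fix x
  assume "x \<in> {(\<Sum>i. ennreal (haus_gauge s (C i))) | C :: nat \<Rightarrow> 'a set.
            E \<subseteq> (\<Union>i. C i) \<and> (\<forall>i. bounded (C i) \<and> diameter (C i) \<le> \<delta>)}"
  then obtain C where x: "x = (\<Sum>i. ennreal (haus_gauge s (C i)))" and cover: "E \<subseteq> (\<Union>i. C i)"
    and bounded: "\<And>i. bounded (C i)" and small: "\<And>i. diameter (C i) \<le> \<delta>"
    by blast
  define D where "D i = (\<lambda>x. d + c *\<^sub>R x) ` C i" for i
  have "(\<lambda>x. d + c *\<^sub>R x) ` E \<subseteq> (\<Union>i. D i)"
    using cover unfolding D_def by blast
  moreover have "\<forall>i. bounded (D i) \<and> diameter (D i) \<le> c * \<delta>"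
    using bounded_homothety_image[OF bounded] diameter_homothety_image[OF bounded assms] small assms
    by (simp add: D_def)
  ultimately have "hausdorff_pre s (c * \<delta>) ((\<lambda>x. d + c *\<^sub>R x) ` E) \<le> (\<Sum>i. ennreal (haus_gauge s (D i)))"
    unfolding hausdorff_pre_def by (intro Inf_lower CollectI exI[of _ D] conjI refl)
  also have "\<dots> = ennreal (c ^ s) * x"
    unfolding x D_def haus_gauge_homothety_image[OF bounded assms] using assms by (simp add: ennreal_mult')
  finally show "hausdorff_pre s (c * \<delta>) ((\<lambda>x. d + c *\<^sub>R x) ` E) \<le> ennreal (c ^ s) * x" .
next
  show "ennreal (c ^ s) \<noteq> 0" "ennreal (c ^ s) \<noteq> top"
    using assms by simp_all
qed

lemma hausdorff_pre_homothety_image: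
  fixes E :: "'a::euclidean_space set"
  assumes "c > 0"
  shows "hausdorff_pre s (c * \<delta>) ((\<lambda>x. d + c *\<^sub>R x) ` E) = ennreal (c ^ s) * hausdorff_pre s \<delta> E"
proof (rule antisym)
  show "hausdorff_pre s (c * \<delta>) ((\<lambda>x. d + c *\<^sub>R x) ` E) \<le> ennreal (c ^ s) * hausdorff_pre s \<delta> E"
    using hausdorff_pre_homothety_image_le[OF assms] .
  have inverse: "(\<lambda>x. - (1/c) *\<^sub>R d + (1/c) *\<^sub>R x) ` (\<lambda>x. d + c *\<^sub>R x) ` E = E"
    using assms by (force simp: image_image scaleR_add_right)
  have "hausdorff_pre s \<delta> E \<le> ennreal ((1/c) ^ s) * hausdorff_pre s (c * \<delta>) ((\<lambda>x. d + c *\<^sub>R x) ` E)"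
    using hausdorff_pre_homothety_image_le[of "1/c" s "c * \<delta>" "- (1/c) *\<^sub>R d" "(\<lambda>x. d + c *\<^sub>R x) ` E"] assms
    unfolding inverse by simp
  then have "ennreal (c ^ s) * hausdorff_pre s \<delta> E
      \<le> ennreal (c ^ s) * (ennreal ((1/c) ^ s) * hausdorff_pre s (c * \<delta>) ((\<lambda>x. d + c *\<^sub>R x) ` E))"
    by (rule mult_left_mono) simp
  also have "\<dots> = hausdorff_pre s (c * \<delta>) ((\<lambda>x. d + c *\<^sub>R x) ` E)"
    using assms by (simp add: mult.assoc[symmetric] power_mult_distrib[symmetric] flip: ennreal_mult')
  finally show "ennreal (c ^ s) * hausdorff_pre s \<delta> E \<le> hausdorff_pre s (c * \<delta>) ((\<lambda>x. d + c *\<^sub>R x) ` E)" .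
qed

lemma hausdorff_homothety_image:
  fixes E :: "'a::euclidean_space set"
  assumes "c > 0"
  shows "hausdorff s ((\<lambda>x. d + c *\<^sub>R x) ` E) = ennreal (c ^ s) * hausdorff s E"
proof -
  have "(*) c ` {0<..} = {0::real<..}"
  proof (intro set_eqI iffI)
    fix x :: real assume "x \<in> {0<..}"
    then show "x \<in> (*) c ` {0<..}"
      using assms by (intro image_eqI[of _ _ "x / c"]) auto
  qed (use assms in auto)
  then have "hausdorff s ((\<lambda>x. d + c *\<^sub>R x) ` E)
      = (SUP \<delta>\<in>(*) c ` {0<..}. hausdorff_pre s \<delta> ((\<lambda>x. d + c *\<^sub>R x) ` E))"
    unfolding hausdorff_def by simp
  also have "\<dots> = (SUP \<delta>\<in>{0<..}. hausdorff_pre s (c * \<delta>) ((\<lambda>x. d + c *\<^sub>R x) ` E))"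
    by (simp add: image_comp)
  also have "\<dots> = ennreal (c ^ s) * hausdorff s E"
    unfolding hausdorff_def hausdorff_pre_homothety_image[OF assms] by (simp add: SUP_mult_left_ennreal)
  finally show ?thesis .
qed

lemma hausdorff_mono:
  fixes E F :: "'a::euclidean_space set"
  assumes "E \<subseteq> F"
  shows "hausdorff s E \<le> hausdorff s F"
proof -
  have "hausdorff_pre s \<delta> E \<le> hausdorff_pre s \<delta> F" for \<delta>
    unfolding hausdorff_pre_def by (rule Inf_superset_mono) (use assms in blast)
  then show ?thesis
    unfolding hausdorff_def by (intro SUP_mono) blast
qed

lemma borel_measurable_antimono_ennreal:
  fixes h :: "real \<Rightarrow> ennreal"
  assumes "antimono h"
  shows "h \<in> borel_measurable borel"
proof (rule borel_measurableI_greater)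
  fix y
  have "is_interval {x. y < h x}"
    using assms unfolding is_interval_1 by (auto intro: less_le_trans dest: antimonoD)
  then show "{x \<in> space borel. y < h x} \<in> sets borel"
    by (simp add: real_interval_borel_measurable)
qed

lemma hausdorff_integral_vimage_homothety:
  fixes d :: "'a::euclidean_space"
  assumes "t > 0"
  shows "hausdorff_integral s ((\<lambda>x. d + t *\<^sub>R x) -` F) (\<lambda>x. f (d + t *\<^sub>R x))
           = ennreal ((1/t) ^ s) * hausdorff_integral s F f"
proof -
  define h where "h \<tau> = hausdorff s {y \<in> F. f y > \<tau>}" for \<tau>
  have "antimono h"
    unfolding h_def by (intro antimonoI hausdorff_mono) auto
  then have [measurable]: "h \<in> borel_measurable borel"
    by (rule borel_measurable_antimono_ennreal)
  have "{x \<in> (\<lambda>x. d + t *\<^sub>R x) -` F. f (d + t *\<^sub>R x) > \<tau>}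
      = (\<lambda>y. - (1/t) *\<^sub>R d + (1/t) *\<^sub>R y) ` {y \<in> F. f y > \<tau>}" for \<tau>
    using vimage_homothety_eq_image[of t d "{y \<in> F. f y > \<tau>}"] assms by (simp add: vimage_def)
  then have "hausdorff_integral s ((\<lambda>x. d + t *\<^sub>R x) -` F) (\<lambda>x. f (d + t *\<^sub>R x))
      = (\<integral>\<^sup>+ \<tau>. ennreal ((1/t) ^ s) * (h \<tau> * indicator {0<..} \<tau>) \<partial>lborel)"
    unfolding hausdorff_integral_def h_def
    using hausdorff_homothety_image[of "1/t" s "- (1/t) *\<^sub>R d"] assms by (simp add: mult.assoc)
  also have "\<dots> = ennreal ((1/t) ^ s) * (\<integral>\<^sup>+ \<tau>. h \<tau> * indicator {0<..} \<tau> \<partial>lborel)"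
    by (rule nn_integral_cmult) measurable
  also have "\<dots> = ennreal ((1/t) ^ s) * hausdorff_integral s F f"
    by (simp add: hausdorff_integral_def h_def)
  finally show ?thesis .
qed

section \<open>Test functions and constant functions\<close>

lemma test_function_vanishes_outside_support:
  assumes "test_function A \<phi> D\<phi>" "x \<notin> closure {x. \<phi> x \<noteq> 0}"
  shows "\<phi> x = 0" "D\<phi> x = 0"
proof -
  show "\<phi> x = 0"
    using assms(2) closure_subset[of "{x. \<phi> x \<noteq> 0}"] by blast
  have "((\<lambda>_. 0) has_derivative (\<lambda>h. 0)) (at x)"
    by simp
  then have "(\<phi> has_derivative (\<lambda>h. 0)) (at x)"
  proof (rule has_derivative_transform_within_open)
    show "open (- closure {x. \<phi> x \<noteq> 0})" "x \<in> - closure {x. \<phi> x \<noteq> 0}"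
      using assms(2) by auto
    show "0 = \<phi> y" if "y \<in> - closure {x. \<phi> x \<noteq> 0}" for y
      using that closure_subset[of "{x. \<phi> x \<noteq> 0}"] by auto
  qed
  moreover have "(\<phi> has_derivative (\<lambda>h. D\<phi> x \<bullet> h)) (at x)"
    using assms(1) by (simp add: test_function_def)
  ultimately have "(\<lambda>h. D\<phi> x \<bullet> h) = (\<lambda>h. 0)"
    by (rule has_derivative_unique[rotated])
  then have "D\<phi> x \<bullet> D\<phi> x = 0"
    by (rule fun_cong)
  then show "D\<phi> x = 0"
    by simp
qed

lemma has_integral_UNIV_iff_support:
  fixes f :: "'a::euclidean_space \<Rightarrow> 'b::banach"
  assumes "\<And>x. x \<notin> S \<Longrightarrow> f x = 0"
  shows "(f has_integral i) UNIV \<longleftrightarrow> (f has_integral i) S"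
proof -
  have "(\<lambda>x. if x \<in> S then f x else 0) = f"
    using assms by auto
  then show ?thesis
    using has_integral_restrict_UNIV[of S f i] by simp
qed

lemma test_function_support_box:
  fixes \<phi> :: "'a::euclidean_space \<Rightarrow> real"
  assumes tf: "test_function A \<phi> D\<phi>"
  obtains a where "\<And>u x. norm u \<le> 1 \<Longrightarrow> x \<notin> cbox (-a + u) (a + u) \<Longrightarrow> \<phi> x = 0 \<and> D\<phi> x = 0"
proof -
  define K where "K = closure {x. \<phi> x \<noteq> 0}"
  have "compact K"
    using tf by (simp add: test_function_def K_def)
  then have "bounded {x + y | x y. x \<in> K \<and> y \<in> cball 0 1}"
    by (intro compact_imp_bounded compact_sums compact_cball)
  then obtain a where box: "{x + y | x y. x \<in> K \<and> y \<in> cball 0 1} \<subseteq> cbox (-a) a"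
    by (rule bounded_subset_cbox_symmetric)
  have "K \<subseteq> cbox (-a + u) (a + u)" if "norm u \<le> 1" for u
  proof
    fix x assume "x \<in> K"
    then have "x + - u \<in> {x + y | x y. x \<in> K \<and> y \<in> cball 0 1}"
      using that by (intro CollectI exI[of _ x] exI[of _ "- u"]) simp
    then have "x - u \<in> cbox (-a) a"
      using subsetD[OF box] by simp
    then show "x \<in> cbox (-a + u) (a + u)"
      by (auto simp: mem_box inner_diff_left inner_add_left)
  qed
  then show ?thesis
    using that test_function_vanishes_outside_support[OF tf] unfolding K_def by blast
qed

lemma has_field_derivative_integral_translate:
  fixes \<phi> :: "'a::euclidean_space \<Rightarrow> real"
  assumes deriv: "\<And>x. (\<phi> has_derivative (\<lambda>h. D\<phi> x \<bullet> h)) (at x)" and cont_D\<phi>: "continuous_on UNIV D\<phi>"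
  shows "((\<lambda>s. integral (cbox a b) (\<lambda>x. \<phi> (s *\<^sub>R e + x)))
           has_field_derivative integral (cbox a b) (\<lambda>x. D\<phi> x \<bullet> e)) (at 0)"
proof -
  have cont_\<phi>: "continuous_on UNIV \<phi>"
    by (intro continuous_at_imp_continuous_on ballI has_derivative_continuous[OF deriv])
  have "((\<lambda>s. integral (cbox a b) (\<lambda>x. \<phi> (s *\<^sub>R e + x)))
      has_field_derivative integral (cbox a b) (\<lambda>x. D\<phi> (0 *\<^sub>R e + x) \<bullet> e)) (at 0 within ball 0 1)"
  proof (rule leibniz_rule_field_derivative)
    fix s :: real and x :: 'a
    have chain: "((\<lambda>s. \<phi> (s *\<^sub>R e + x)) has_derivative (\<lambda>h. D\<phi> (s *\<^sub>R e + x) \<bullet> (h *\<^sub>R e))) (at s)"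
      by (rule has_derivative_compose[OF _ deriv]) (auto intro!: derivative_eq_intros)
    have "(\<lambda>h. D\<phi> (s *\<^sub>R e + x) \<bullet> (h *\<^sub>R e)) = (*) (D\<phi> (s *\<^sub>R e + x) \<bullet> e)"
      by (auto simp: fun_eq_iff)
    with chain show "((\<lambda>s. \<phi> (s *\<^sub>R e + x)) has_field_derivative D\<phi> (s *\<^sub>R e + x) \<bullet> e)
        (at s within ball 0 1)"
      unfolding has_field_derivative_def by (simp add: has_derivative_at_withinI)
  next
    have "continuous_on (cbox a b) (\<lambda>x. \<phi> (s *\<^sub>R e + x))" for s
      by (rule continuous_on_compose2[OF cont_\<phi>]) (auto intro!: continuous_intros)
    then show "(\<lambda>x. \<phi> (s *\<^sub>R e + x)) integrable_on cbox a b" for s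
      by (rule integrable_continuous)
    have "continuous_on (ball 0 1 \<times> cbox a b) (\<lambda>p. D\<phi> (fst p *\<^sub>R e + snd p))"
      by (rule continuous_on_compose2[OF cont_D\<phi>]) (auto intro!: continuous_intros)
    then show "continuous_on (ball 0 1 \<times> cbox a b) (\<lambda>(s, x). D\<phi> (s *\<^sub>R e + x) \<bullet> e)"
      unfolding split_beta by (intro continuous_on_inner continuous_on_const)
  qed auto
  moreover have "at (0::real) within ball 0 1 = at 0"
    by (intro at_within_open open_ball) simp
  ultimately show ?thesis
    by simp
qed

text \<open>Translating \<open>\<phi>\<close> in a basis direction \<open>e\<close> does not change its integral, so
  differentiating under the integral sign at zero translation gives \<open>\<integral> D\<phi> \<bullet> e = 0\<close>.\<close>

lemma test_function_gradient_has_integral_zero: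
  fixes \<phi> :: "'a::euclidean_space \<Rightarrow> real"
  assumes tf: "test_function A \<phi> D\<phi>"
  shows "(D\<phi> has_integral 0) UNIV"
proof -
  obtain a where box: "\<And>u x. norm u \<le> 1 \<Longrightarrow> x \<notin> cbox (-a + u) (a + u) \<Longrightarrow> \<phi> x = 0 \<and> D\<phi> x = 0"
    using test_function_support_box[OF tf] by blast
  have deriv: "\<And>x. (\<phi> has_derivative (\<lambda>h. D\<phi> x \<bullet> h)) (at x)" and cont_D\<phi>: "continuous_on UNIV D\<phi>"
    using tf by (auto simp: test_function_def)
  have outside: "\<phi> x = 0" "D\<phi> x = 0" if "x \<notin> cbox (-a) a" for x
    using box[of 0 x] that by simp_all
  have "continuous_on UNIV \<phi>"
    by (intro continuous_at_imp_continuous_on ballI has_derivative_continuous[OF deriv])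
  then obtain I where "(\<phi> has_integral I) (cbox (-a) a)"
    using integrable_continuous[OF continuous_on_subset] by blast
  then have I: "(\<phi> has_integral I) UNIV"
    using has_integral_UNIV_iff_support[of "cbox (-a) a" \<phi>] outside(1) by simp
  have "((\<lambda>x. D\<phi> x \<bullet> e) has_integral 0) UNIV" if "e \<in> Basis" for e
  proof -
    have translate: "integral (cbox (-a) a) (\<lambda>x. \<phi> (s *\<^sub>R e + x)) = I" if "s \<in> ball 0 1" for s
    proof -
      have "\<phi> x = 0" if "x \<notin> cbox (-a + s *\<^sub>R e) (a + s *\<^sub>R e)" for x
        using box[of "s *\<^sub>R e" x] that \<open>s \<in> ball 0 1\<close> \<open>e \<in> Basis\<close> by simp
      then have "(\<phi> has_integral I) (cbox (-a + s *\<^sub>R e) (a + s *\<^sub>R e))"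
        using I has_integral_UNIV_iff_support by blast
      then have "((\<phi> \<circ> (+) (s *\<^sub>R e)) has_integral I) (cbox (-a) a)"
        by (simp only: has_integral_shift_cbox_iff)
      then show ?thesis
        by (simp add: o_def integral_unique)
    qed
    have "((\<lambda>_. I) has_field_derivative 0) (at 0)"
      by simp
    then have "((\<lambda>s. integral (cbox (-a) a) (\<lambda>x. \<phi> (s *\<^sub>R e + x))) has_field_derivative 0) (at 0)"
      by (rule has_field_derivative_transform_within_open[where S="ball 0 1"]) (simp_all add: translate)
    with has_field_derivative_integral_translate[OF deriv cont_D\<phi>]
    have "integral (cbox (-a) a) (\<lambda>x. D\<phi> x \<bullet> e) = 0"
      by (rule DERIV_unique)
    moreover have "((\<lambda>x. D\<phi> x \<bullet> e) has_integral integral (cbox (-a) a) (\<lambda>x. D\<phi> x \<bullet> e)) (cbox (-a) a)"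
      by (intro integrable_integral integrable_continuous continuous_on_inner continuous_on_const
          continuous_on_subset[OF cont_D\<phi>]) auto
    ultimately show ?thesis
      using has_integral_UNIV_iff_support[of "cbox (-a) a" "\<lambda>x. D\<phi> x \<bullet> e"] outside by simp
  qed
  then show ?thesis
    by (subst has_integral_componentwise_iff) simp
qed

lemma test_function_gradient_integral_zero:
  fixes \<phi> :: "'a::euclidean_space \<Rightarrow> real"
  assumes tf: "test_function A \<phi> D\<phi>"
  shows "integrable lebesgue D\<phi>" "integral\<^sup>L lebesgue D\<phi> = 0"
proof -
  define K where "K = closure {x. \<phi> x \<noteq> 0}"
  have "compact K" and cont: "continuous_on UNIV D\<phi>"
    using tf by (auto simp: test_function_def K_def)
  have "(\<lambda>x. indicator K x *\<^sub>R D\<phi> x) = D\<phi>"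
    using test_function_vanishes_outside_support(2)[OF tf] by (auto simp: K_def indicator_def)
  moreover have "integrable lborel (\<lambda>x. indicator K x *\<^sub>R D\<phi> x)"
    using borel_integrable_compact[OF \<open>compact K\<close> continuous_on_subset[OF cont]] by simp
  ultimately have "integrable lborel D\<phi>"
    by simp
  moreover have "D\<phi> \<in> borel_measurable lborel"
    using borel_measurable_continuous_onI[OF cont] by simp
  ultimately show "integrable lebesgue D\<phi>"
    by (simp add: integrable_completion)
  then show "integral\<^sup>L lebesgue D\<phi> = 0"
    using has_integral_integral_lebesgue test_function_gradient_has_integral_zero[OF tf] has_integral_unique
    by blast
qed

lemma weak_gradient_const: "weak_gradient A (\<lambda>_. c) (\<lambda>_. 0)"
  unfolding weak_gradient_def
proof (intro allI impI)
  fix \<phi> D\<phi> assume tf: "test_function A \<phi> D\<phi>"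
  have "D\<phi> x = 0" if "x \<notin> A" for x
    using test_function_vanishes_outside_support(2)[OF tf] tf that by (auto simp: test_function_def)
  then have "(\<lambda>x. indicator A x *\<^sub>R D\<phi> x) = D\<phi>"
    by (auto simp: indicator_def)
  then show "(LINT x:A|lebesgue. c *\<^sub>R D\<phi> x) = - (LINT x:A|lebesgue. \<phi> x *\<^sub>R 0)"
    using test_function_gradient_integral_zero(2)[OF tf] by (simp add: set_lebesgue_integral_def)
qed

lemma W12_const:
  assumes "A \<in> lmeasurable"
  shows "W12 A (\<lambda>_. c) (\<lambda>_. 0)"
proof -
  have "integrable lebesgue (\<lambda>x. indicator A x * c\<^sup>2)"
    using assms by (intro integrable_mult_left integrable_real_indicator) (auto simp: fmeasurable_def)
  moreover have "(\<lambda>x. indicator A x * c) \<in> borel_measurable lebesgue"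
    using assms by (intro borel_measurable_times borel_measurable_indicator) auto
  ultimately show ?thesis
    using weak_gradient_const[of A c] by (simp add: W12_def set_integrable_def)
qed

section \<open>Pulling back along a homothety\<close>

lemma measure_vimage_homothety:
  fixes d :: "'a::euclidean_space"
  assumes "t \<noteq> 0"
  shows "measure lebesgue ((\<lambda>x. d + t *\<^sub>R x) -` A) = measure lebesgue A / \<bar>t\<bar> ^ DIM('a)"
  using measure_lebesgue_affine[of "1/t" "- (1/t) *\<^sub>R d" A] assms
  by (simp add: vimage_homothety_eq_image add.commute power_one_over)

lemma set_integral_vimage_homothety:
  fixes f :: "'a::euclidean_space \<Rightarrow> 'b::euclidean_space"
  assumes "t > 0"
  shows "(LINT x:(\<lambda>x. d + t *\<^sub>R x) -` A|lebesgue. f (d + t *\<^sub>R x)) = (LINT y:A|lebesgue. f y) /\<^sub>R t ^ DIM('a)"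
  using set_integral_homothety(1)[of t A f d] assms by simp

lemma Lim_at_right_0_rescale:
  fixes f :: "real \<Rightarrow> 'a::t2_space"
  assumes "t > 0"
  shows "Lim (at_right 0) (\<lambda>\<rho>. f (t * \<rho>)) = Lim (at_right 0) f"
proof -
  have "(f \<longlongrightarrow> L) (at_right 0) \<longleftrightarrow> (f \<longlongrightarrow> L) (filtermap ((*) t) (at_right 0))" for L
    by (simp add: filtermap_times_pos_at_right[OF assms])
  also have "\<dots> L \<longleftrightarrow> ((\<lambda>\<rho>. f (t * \<rho>)) \<longlongrightarrow> L) (at_right 0)" for L
    by (rule filterlim_filtermap)
  finally show ?thesis
    by (simp add: Topological_Spaces.Lim_def)
qed

lemma boundary_trace_vimage_homothety:
  fixes d :: "'a::euclidean_space"
  assumes "t > 0"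
  shows "boundary_trace ((\<lambda>x. d + t *\<^sub>R x) -` A) (\<lambda>x. v (d + t *\<^sub>R x)) x = boundary_trace A v (d + t *\<^sub>R x)"
proof -
  let ?T = "\<lambda>x. d + t *\<^sub>R x"
  define avg where "avg = (\<lambda>\<rho>. (LINT y:ball (?T x) \<rho> \<inter> A|lebesgue. v y) / measure lebesgue (ball (?T x) \<rho> \<inter> A))"
  have "(LINT y:ball x \<rho> \<inter> ?T -` A|lebesgue. v (?T y)) / measure lebesgue (ball x \<rho> \<inter> ?T -` A) = avg (t * \<rho>)"
    for \<rho>
  proof -
    define Q where "Q = ball (?T x) (t * \<rho>) \<inter> A"
    have "ball x \<rho> \<inter> ?T -` A = ?T -` Q"
      using vimage_homothety_ball[OF assms, of d x \<rho>] by (auto simp: Q_def)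
    moreover have "(LINT y:?T -` Q|lebesgue. v (?T y)) = (LINT y:Q|lebesgue. v y) / t ^ DIM('a)"
      using set_integral_vimage_homothety[OF assms, of d Q v] by (simp add: divide_inverse_commute)
    moreover have "measure lebesgue (?T -` Q) = measure lebesgue Q / t ^ DIM('a)"
      using measure_vimage_homothety[of t d Q] assms by simp
    ultimately show ?thesis
      using assms by (simp add: avg_def Q_def divide_divide_times_eq mult.commute)
  qed
  then have "boundary_trace (?T -` A) (\<lambda>x. v (?T x)) x = Lim (at_right 0) (\<lambda>\<rho>. avg (t * \<rho>))"
    by (simp add: boundary_trace_def)
  also have "\<dots> = Lim (at_right 0) avg"
    by (rule Lim_at_right_0_rescale[OF assms])
  also have "\<dots> = boundary_trace A v (?T x)"
    by (simp add: boundary_trace_def avg_def)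
  finally show ?thesis .
qed

lemma test_function_vimage_homothety:
  fixes d :: "'a::euclidean_space"
  assumes "t \<noteq> 0" and tf: "test_function ((\<lambda>x. d + t *\<^sub>R x) -` A) \<phi> D\<phi>"
  shows "test_function A (\<lambda>y. \<phi> (- (1/t) *\<^sub>R d + (1/t) *\<^sub>R y)) (\<lambda>y. (1/t) *\<^sub>R D\<phi> (- (1/t) *\<^sub>R d + (1/t) *\<^sub>R y))"
proof -
  let ?S = "\<lambda>y. - (1/t) *\<^sub>R d + (1/t) *\<^sub>R y"
  define K where "K = closure {x. \<phi> x \<noteq> 0}"
  have deriv: "\<And>x. (\<phi> has_derivative (\<lambda>h. D\<phi> x \<bullet> h)) (at x)" and cont: "continuous_on UNIV D\<phi>"
    and "compact K" and support: "K \<subseteq> (\<lambda>x. d + t *\<^sub>R x) -` A"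
    using tf by (auto simp: test_function_def K_def)
  have "((\<lambda>y. \<phi> (?S y)) has_derivative (\<lambda>h. (1/t) *\<^sub>R D\<phi> (?S y) \<bullet> h)) (at y)" for y
    by (rule has_derivative_compose[OF _ deriv, THEN has_derivative_eq_rhs])
      (auto intro!: derivative_eq_intros simp: fun_eq_iff)
  moreover have "continuous_on UNIV (\<lambda>y. D\<phi> (?S y))"
    by (rule continuous_on_compose2[OF cont]) (auto intro!: continuous_intros)
  then have "continuous_on UNIV (\<lambda>y. (1/t) *\<^sub>R D\<phi> (?S y))"
    by (intro continuous_on_scaleR continuous_on_const)
  moreover have closure: "closure {y. \<phi> (?S y) \<noteq> 0} = ?S -` K"
    using closure_vimage_homothety[of "1/t" "- (1/t) *\<^sub>R d" "{x. \<phi> x \<noteq> 0}"] assms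
    by (simp add: K_def vimage_def)
  moreover have "?S -` K = (\<lambda>x. d + t *\<^sub>R x) ` K"
    using vimage_homothety_eq_image[of "1/t" "- (1/t) *\<^sub>R d" K] assms by simp
  moreover have "compact ((\<lambda>x. d + t *\<^sub>R x) ` K)"
    by (intro compact_continuous_image continuous_intros \<open>compact K\<close>)
  moreover have "(\<lambda>x. d + t *\<^sub>R x) ` K \<subseteq> A"
    using support by auto
  ultimately show ?thesis
    by (simp add: test_function_def)
qed

lemma weak_gradient_vimage_homothety:
  fixes d :: "'a::euclidean_space"
  assumes "t > 0" and wg: "weak_gradient A v g"
  shows "weak_gradient ((\<lambda>x. d + t *\<^sub>R x) -` A) (\<lambda>x. v (d + t *\<^sub>R x)) (\<lambda>x. t *\<^sub>R g (d + t *\<^sub>R x))"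
  unfolding weak_gradient_def
proof (intro allI impI)
  let ?T = "\<lambda>x. d + t *\<^sub>R x" and ?S = "\<lambda>y. - (1/t) *\<^sub>R d + (1/t) *\<^sub>R y"
  fix \<phi> D\<phi> assume "test_function (?T -` A) \<phi> D\<phi>"
  then have "test_function A (\<lambda>y. \<phi> (?S y)) (\<lambda>y. (1/t) *\<^sub>R D\<phi> (?S y))"
    using assms by (intro test_function_vimage_homothety) auto
  with wg have hyp: "(LINT y:A|lebesgue. v y *\<^sub>R ((1/t) *\<^sub>R D\<phi> (?S y))) = - (LINT y:A|lebesgue. \<phi> (?S y) *\<^sub>R g y)"
    unfolding weak_gradient_def by blast
  define I1 where "I1 = (LINT x:?T -` A|lebesgue. v (?T x) *\<^sub>R D\<phi> x)"
  define I2 where "I2 = (LINT x:?T -` A|lebesgue. \<phi> x *\<^sub>R g (?T x))"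
  have inverse: "?S (?T x) = x" for x
    using assms by (simp add: scaleR_add_right)
  have "(LINT x:?T -` A|lebesgue. v (?T x) *\<^sub>R ((1/t) *\<^sub>R D\<phi> x)) = - I2"
    using hyp set_integral_vimage_homothety[OF assms(1), of d A "\<lambda>y. v y *\<^sub>R ((1/t) *\<^sub>R D\<phi> (?S y))"]
      set_integral_vimage_homothety[OF assms(1), of d A "\<lambda>y. \<phi> (?S y) *\<^sub>R g y"]
    unfolding I2_def inverse by simp
  moreover have "(LINT x:?T -` A|lebesgue. v (?T x) *\<^sub>R ((1/t) *\<^sub>R D\<phi> x)) = (1/t) *\<^sub>R I1"
    unfolding I1_def by (subst scaleR_left_commute) (rule set_integral_scaleR_right)
  ultimately have "(1/t) *\<^sub>R I1 = - I2"
    by simp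
  have "I1 = t *\<^sub>R ((1/t) *\<^sub>R I1)"
    using assms by simp
  also have "\<dots> = - t *\<^sub>R I2"
    unfolding \<open>(1/t) *\<^sub>R I1 = - I2\<close> by simp
  finally have "I1 = - t *\<^sub>R I2" .
  moreover have "(LINT x:?T -` A|lebesgue. \<phi> x *\<^sub>R (t *\<^sub>R g (?T x))) = t *\<^sub>R I2"
    unfolding I2_def by (subst scaleR_left_commute) (rule set_integral_scaleR_right)
  ultimately show "(LINT x:?T -` A|lebesgue. v (?T x) *\<^sub>R D\<phi> x)
      = - (LINT x:?T -` A|lebesgue. \<phi> x *\<^sub>R (t *\<^sub>R g (?T x)))"
    unfolding I1_def by simp
qed

lemma W12_vimage_homothety:
  fixes d :: "'a::euclidean_space"
  assumes "t > 0" and W: "W12 A v g"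
  shows "W12 ((\<lambda>x. d + t *\<^sub>R x) -` A) (\<lambda>x. v (d + t *\<^sub>R x)) (\<lambda>x. t *\<^sub>R g (d + t *\<^sub>R x))"
proof -
  let ?T = "\<lambda>x. d + t *\<^sub>R x"
  have T: "?T \<in> lebesgue \<rightarrow>\<^sub>M lebesgue"
    using assms by (intro lebesgue_homothety(2)) simp
  have "(\<lambda>y. indicator A y * v y) \<in> borel_measurable lebesgue"
    using W by (simp add: W12_def)
  from measurable_compose[OF T this]
  have measurable_v: "(\<lambda>x. indicator (?T -` A) x * v (?T x)) \<in> borel_measurable lebesgue"
    by (simp add: indicator_vimage)
  have "(\<lambda>y. indicator A y *\<^sub>R g y) \<in> borel_measurable lebesgue"
    using W by (simp add: W12_def)
  then have "(\<lambda>y. t *\<^sub>R (indicator A y *\<^sub>R g y)) \<in> borel_measurable lebesgue"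
    by (rule borel_measurable_scaleR[OF borel_measurable_const])
  from measurable_compose[OF T this]
  have "(\<lambda>x. t *\<^sub>R (indicator A (?T x) *\<^sub>R g (?T x))) \<in> borel_measurable lebesgue"
    by simp
  moreover have "(\<lambda>x. t *\<^sub>R (indicator A (?T x) *\<^sub>R g (?T x))) = (\<lambda>x. indicator (?T -` A) x *\<^sub>R (t *\<^sub>R g (?T x)))"
    by (simp add: fun_eq_iff indicator_def)
  ultimately have measurable_g: "(\<lambda>x. indicator (?T -` A) x *\<^sub>R (t *\<^sub>R g (?T x))) \<in> borel_measurable lebesgue"
    by simp
  have integrable_v: "set_integrable lebesgue (?T -` A) (\<lambda>x. (v (?T x))\<^sup>2)"
    using W set_integral_homothety(2)[where c=t and E=A and f="\<lambda>y. (v y)\<^sup>2" and d=d] assms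
    by (simp add: W12_def)
  have "set_integrable lebesgue (?T -` A) (\<lambda>x. (norm (g (?T x)))\<^sup>2)"
    using W set_integral_homothety(2)[where c=t and E=A and f="\<lambda>y. (norm (g y))\<^sup>2" and d=d] assms
    by (simp add: W12_def)
  then have integrable_g: "set_integrable lebesgue (?T -` A) (\<lambda>x. (norm (t *\<^sub>R g (?T x)))\<^sup>2)"
    using assms set_integrable_mult_right[of "t\<^sup>2"] by (simp add: power_mult_distrib)
  have "weak_gradient (?T -` A) (\<lambda>x. v (?T x)) (\<lambda>x. t *\<^sub>R g (?T x))"
    using W assms by (intro weak_gradient_vimage_homothety) (simp_all add: W12_def)
  with measurable_v measurable_g integrable_v integrable_g show ?thesis
    by (simp only: W12_def)
qed

section \<open>Rescaling the Robin quotient\<close>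

definition robin_quotients :: "real \<Rightarrow> 'a::euclidean_space set \<Rightarrow> real set" where
  "robin_quotients \<beta> A = {robin_quotient \<beta> A v g | v g. W12 A v g \<and> \<not> (AE x in lebesgue. x \<in> A \<longrightarrow> v x = 0)}"

lemma robin_eigenvalue_eq_Inf: "robin_eigenvalue \<beta> A = Inf (robin_quotients \<beta> A)"
  by (simp add: robin_eigenvalue_def robin_quotients_def)

lemma robin_quotients_nonempty:
  assumes "A \<in> lmeasurable" "A \<notin> null_sets lebesgue"
  shows "robin_quotients \<beta> A \<noteq> {}"
proof -
  have "\<not> (AE x in lebesgue. x \<in> A \<longrightarrow> (1::real) = 0)"
    using assms AE_iff_null_sets[of A lebesgue] by auto
  then show ?thesis
    using W12_const[OF assms(1), of 1] by (auto simp: robin_quotients_def)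
qed

lemma W12_AE_zero_iff:
  assumes "W12 A v g"
  shows "(AE x in lebesgue. x \<in> A \<longrightarrow> v x = 0) \<longleftrightarrow> (LINT x:A|lebesgue. (v x)\<^sup>2) = 0"
proof -
  have "integrable lebesgue (\<lambda>x. indicator A x * (v x)\<^sup>2)"
    using assms by (simp add: W12_def set_integrable_def)
  then have "(LINT x:A|lebesgue. (v x)\<^sup>2) = 0 \<longleftrightarrow> (AE x in lebesgue. indicator A x * (v x)\<^sup>2 = 0)"
    by (simp add: set_lebesgue_integral_def integral_nonneg_eq_0_iff_AE)
  also have "\<dots> \<longleftrightarrow> (AE x in lebesgue. x \<in> A \<longrightarrow> v x = 0)"
    by (intro AE_cong) (simp add: indicator_def)
  finally show ?thesis ..
qed

lemma robin_quotient_mono: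
  assumes "\<beta> \<le> \<beta>'"
  shows "robin_quotient \<beta> A v g \<le> robin_quotient \<beta>' A v g"
  unfolding robin_quotient_def set_lebesgue_integral_def
  using assms by (intro divide_right_mono add_left_mono mult_right_mono integral_nonneg) auto

lemma robin_quotient_nonneg:
  assumes "\<beta> \<ge> 0"
  shows "robin_quotient \<beta> A v g \<ge> 0"
  unfolding robin_quotient_def set_lebesgue_integral_def
  using assms by (intro divide_nonneg_nonneg add_nonneg_nonneg mult_nonneg_nonneg integral_nonneg) auto

lemma robin_quotient_vimage_homothety:
  fixes d :: "'a::euclidean_space"
  assumes "t > 0"
  shows "robin_quotient \<beta> ((\<lambda>x. d + t *\<^sub>R x) -` A) (\<lambda>x. v (d + t *\<^sub>R x)) (\<lambda>x. t *\<^sub>R g (d + t *\<^sub>R x))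
           = t\<^sup>2 * robin_quotient (\<beta> / t) A v g"
proof -
  let ?T = "\<lambda>x. d + t *\<^sub>R x" and ?n = "DIM('a)"
  define G where "G = (LINT y:A|lebesgue. (norm (g y))\<^sup>2)"
  define D where "D = (LINT y:A|lebesgue. (v y)\<^sup>2)"
  define H where "H = enn2real (hausdorff_integral (?n - 1) (frontier A) (\<lambda>y. (boundary_trace A v y)\<^sup>2))"
  have "(LINT x:?T -` A|lebesgue. (norm (t *\<^sub>R g (?T x)))\<^sup>2)
      = t\<^sup>2 * (LINT x:?T -` A|lebesgue. (norm (g (?T x)))\<^sup>2)"
    using assms by (simp add: power_mult_distrib set_integral_mult_right)
  also have "\<dots> = t\<^sup>2 * (G / t ^ ?n)"
    using set_integral_vimage_homothety[OF assms, of d A "\<lambda>y. (norm (g y))\<^sup>2"]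
    by (simp add: G_def divide_inverse_commute)
  finally have gradient: "(LINT x:?T -` A|lebesgue. (norm (t *\<^sub>R g (?T x)))\<^sup>2) = t\<^sup>2 * (G / t ^ ?n)" .
  have mass: "(LINT x:?T -` A|lebesgue. (v (?T x))\<^sup>2) = D / t ^ ?n"
    using set_integral_vimage_homothety[OF assms, of d A "\<lambda>y. (v y)\<^sup>2"]
    by (simp add: D_def divide_inverse_commute)
  have boundary: "enn2real (hausdorff_integral (?n - 1) (frontier (?T -` A))
      (\<lambda>x. (boundary_trace (?T -` A) (\<lambda>x. v (?T x)) x)\<^sup>2)) = H / t ^ (?n - 1)"
    using hausdorff_integral_vimage_homothety[OF assms, of "?n - 1" d "frontier A" "\<lambda>y. (boundary_trace A v y)\<^sup>2"]
      assms
    by (simp add: frontier_vimage_homothety boundary_trace_vimage_homothety H_def enn2real_mult power_one_over)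
  have tn: "t ^ ?n = t * t ^ (?n - 1)"
    using DIM_positive[where 'a='a] by (cases ?n) simp_all
  have arith: "(t\<^sup>2 * (G / (t * k)) + \<beta> * (H / k)) / (D / (t * k)) = t\<^sup>2 * ((G + \<beta> / t * H) / D)"
    if "k > 0" for k
    using assms that by (cases "D = 0") (simp_all add: field_simps power2_eq_square)
  have "robin_quotient \<beta> (?T -` A) (\<lambda>x. v (?T x)) (\<lambda>x. t *\<^sub>R g (?T x))
      = (t\<^sup>2 * (G / t ^ ?n) + \<beta> * (H / t ^ (?n - 1))) / (D / t ^ ?n)"
    unfolding robin_quotient_def gradient mass boundary ..
  also have "\<dots> = t\<^sup>2 * ((G + \<beta> / t * H) / D)"
    unfolding tn using assms by (intro arith) simp
  also have "\<dots> = t\<^sup>2 * robin_quotient (\<beta> / t) A v g"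
    unfolding robin_quotient_def G_def D_def H_def ..
  finally show ?thesis .
qed

lemma robin_eigenvalue_vimage_homothety_le:
  fixes d :: "'a::euclidean_space"
  assumes "\<beta> > 0" "t \<ge> 1" "robin_quotients \<beta> A \<noteq> {}"
  shows "robin_eigenvalue \<beta> ((\<lambda>x. d + t *\<^sub>R x) -` A) \<le> t\<^sup>2 * robin_eigenvalue \<beta> A"
proof -
  let ?T = "\<lambda>x. d + t *\<^sub>R x"
  have bdd: "bdd_below (robin_quotients \<beta> (?T -` A))"
    using assms(1) by (auto simp: robin_quotients_def intro!: bdd_belowI[of _ 0] robin_quotient_nonneg)
  have "Inf (robin_quotients \<beta> (?T -` A)) \<le> t\<^sup>2 * q" if q_mem: "q \<in> robin_quotients \<beta> A" for q
  proof -
    obtain v g where q: "q = robin_quotient \<beta> A v g" and W: "W12 A v g"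
      and nonzero: "\<not> (AE x in lebesgue. x \<in> A \<longrightarrow> v x = 0)"
      using q_mem unfolding robin_quotients_def by blast
    have "W12 (?T -` A) (\<lambda>x. v (?T x)) (\<lambda>x. t *\<^sub>R g (?T x))"
      using W assms by (intro W12_vimage_homothety) auto
    moreover have "\<not> (AE x in lebesgue. x \<in> ?T -` A \<longrightarrow> v (?T x) = 0)"
      using nonzero assms W12_AE_zero_iff[OF W] W12_AE_zero_iff[OF calculation]
        set_integral_vimage_homothety[of t d A "\<lambda>y. (v y)\<^sup>2"]
      by simp
    ultimately have "robin_quotient \<beta> (?T -` A) (\<lambda>x. v (?T x)) (\<lambda>x. t *\<^sub>R g (?T x)) \<in> robin_quotients \<beta> (?T -` A)"
      by (auto simp: robin_quotients_def)
    then have "Inf (robin_quotients \<beta> (?T -` A)) \<le> robin_quotient \<beta> (?T -` A) (\<lambda>x. v (?T x)) (\<lambda>x. t *\<^sub>R g (?T x))"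
      by (rule cInf_lower[OF _ bdd])
    also have "\<dots> = t\<^sup>2 * robin_quotient (\<beta> / t) A v g"
      using assms by (intro robin_quotient_vimage_homothety) simp
    also have "\<dots> \<le> t\<^sup>2 * q"
      unfolding q using assms
      by (intro mult_left_mono robin_quotient_mono) (simp_all add: divide_le_eq mult_le_cancel_left1)
    finally show ?thesis .
  qed
  then have "Inf (robin_quotients \<beta> (?T -` A)) / t\<^sup>2 \<le> Inf (robin_quotients \<beta> A)"
    using assms by (intro cInf_greatest) (auto simp: pos_divide_le_eq mult.commute)
  then show ?thesis
    using assms by (simp add: robin_eigenvalue_eq_Inf pos_divide_le_eq mult.commute)
qed

lemma measure_ball_ratio_powr:
  fixes a b :: "'a::euclidean_space"
  assumes "0 < r" "0 < R"
  shows "(measure lebesgue (ball b R) / measure lebesgue (ball a r)) powr (2 / DIM('a)) = (R / r)\<^sup>2"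
proof -
  have "unit_ball_vol (real DIM('a)) \<noteq> 0"
    using unit_ball_vol_pos[of "real DIM('a)"] by linarith
  then have "measure lebesgue (ball b R) / measure lebesgue (ball a r) = (R / r) ^ DIM('a)"
    using assms by (simp add: content_ball power_divide)
  also have "\<dots> = (R / r) powr DIM('a)"
    using assms by (simp add: powr_realpow)
  finally have "(measure lebesgue (ball b R) / measure lebesgue (ball a r)) powr (2 / DIM('a))
      = (R / r) powr (DIM('a) * (2 / DIM('a)))"
    by (simp add: powr_powr)
  also have "\<dots> = (R / r)\<^sup>2"
    using assms by (simp add: powr_realpow[of _ 2, simplified])
  finally show ?thesis .
qed

theorem lemma2p16:
  fixes a b :: "'a::euclidean_space" and \<beta> r R :: real
  assumes "\<beta> > 0" and "0 < r" and "r < R"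
  shows "robin_eigenvalue \<beta> (ball a r)
           \<le> (measure lebesgue (ball b R) / measure lebesgue (ball a r)) powr (2 / real DIM('a))
              * robin_eigenvalue \<beta> (ball b R)"
proof -
  define t where "t = R / r"
  have "t \<ge> 1"
    using assms by (simp add: t_def)
  have "(\<lambda>x. (b - t *\<^sub>R a) + t *\<^sub>R x) -` ball b R = ball a r"
    using vimage_homothety_ball[of t "b - t *\<^sub>R a" a r] \<open>t \<ge> 1\<close> assms by (simp add: t_def)
  moreover have "robin_quotients \<beta> (ball b R) \<noteq> {}"
    using assms content_ball_pos[of R b]
    by (intro robin_quotients_nonempty) (auto dest: measure_eq_0_null_sets)
  ultimately have "robin_eigenvalue \<beta> (ball a r) \<le> t\<^sup>2 * robin_eigenvalue \<beta> (ball b R)"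
    using robin_eigenvalue_vimage_homothety_le[of \<beta> t "ball b R" "b - t *\<^sub>R a"] assms \<open>t \<ge> 1\<close> by simp
  then show ?thesis
    using measure_ball_ratio_powr[of r R b a] assms by (simp add: t_def)
qed

end
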